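(* Let $T=(T_{i,j})_{i,j\in\mathbb{Z}}$ be a translation-invariant stochastic matrix on $\mathbb{Z}$ that is strictly finite-ranged: there are nonnegative integers $l_1,l_2$ with $T_{j-l,j}=0$ for $l>l_1$, $T_{j+l,j}=0$ for $l>l_2$, $T_{j-l_1,j}\ne0$, $T_{j+l_2,j}\ne0$. Let $\xi(k)=\sum_lT_{j+l,j}e^{-ikl}$ and assume $\xi(k)\ne0$ for all $k\in[-\pi,\pi]$. If $$T_{j-l_1,j}\ge T_{j-l_1+1,j}\ge\cdots\ge T_{j+l_2,j}\ (\ge0),$$ then $w(T,0)=l_1$. In particular, if $T_{j+l,j}=0$ for all $l<0$ and $T_{j,j}\ge T_{j+1,j}\ge\cdots\ge T_{j+l_2,j}$, then $w(T,0)=0$.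
   Context: A stochastic matrix on $\mathbb{Z}$ is a real matrix $(T_{i,j})$ with $T_{i,j}\ge0$ and $\sum_iT_{i,j}=1$ for each $j$; it is translation invariant if $T_{i+1,j+1}=T_{i,j}$ (so $T_{j+l,j}$ is independent of $j$). The winding number is $w(T,0)=\int_{-\pi}^{\pi}\frac{dk}{2\pi i}\partial_k\log\xi(k)\in\mathbb{Z}$. *)

theory Defs
  imports "HOL-Analysis.Analysis"
begin

text \<open>Matrices on Z are functions T :: int => int => real, T i j = T_{i,j}.\<close>

definition stochastic :: "(int \<Rightarrow> int \<Rightarrow> real) \<Rightarrow> bool" where
  "stochastic T \<longleftrightarrow> (\<forall>i j. T i j \<ge> 0) \<and> (\<forall>j. ((\<lambda>i. T i j) has_sum 1) UNIV)"

definition translation_invariant :: "(int \<Rightarrow> int \<Rightarrow> real) \<Rightarrow> bool" where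
  "translation_invariant T \<longleftrightarrow> (\<forall>i j. T (i + 1) (j + 1) = T i j)"

definition strictly_finite_ranged :: "(int \<Rightarrow> int \<Rightarrow> real) \<Rightarrow> nat \<Rightarrow> nat \<Rightarrow> bool" where
  "strictly_finite_ranged T l1 l2 \<longleftrightarrow>
     (\<forall>j l. l > int l1 \<longrightarrow> T (j - l) j = 0) \<and>
     (\<forall>j l. l > int l2 \<longrightarrow> T (j + l) j = 0) \<and>
     (\<forall>j. T (j - int l1) j \<noteq> 0) \<and> (\<forall>j. T (j + int l2) j \<noteq> 0)"

text \<open>xi(k) = sum_l T_{j+l,j} e^{-ikl}, taken at j = 0 (independent of j by translation invariance).\<close>
definition xi :: "(int \<Rightarrow> int \<Rightarrow> real) \<Rightarrow> real \<Rightarrow> complex" where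
  "xi T k = (\<Sum>\<^sub>\<infinity>l\<in>UNIV. complex_of_real (T l 0) * exp (- \<i> * of_real k * of_int l))"

text \<open>w(T,0) = int_{-pi}^{pi} dk/(2 pi i) d/dk log xi(k), with d/dk log xi = xi'/xi.\<close>
definition winding :: "(int \<Rightarrow> int \<Rightarrow> real) \<Rightarrow> complex" where
  "winding T = integral {-pi..pi} (\<lambda>k. vector_derivative (xi T) (at k) / xi T k) / (2 * of_real pi * \<i>)"

end

theory Submission
  imports Defs "HOL-Complex_Analysis.Cauchy_Integral_Formula"
begin

text \<open>
  Finite range gives \<open>\<xi>(k) = exp(i l\<^sub>1 k) P(exp(-i k))\<close> with \<open>P(z) = \<Sum>\<^sub>m T(m - l\<^sub>1, 0) z\<^sup>m\<close>,
  a polynomial whose coefficients decrease by hypothesis. For such a polynomial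
  \<open>Re((1 - z) P(z)) \<ge> (1 - |z|) P(0)\<close> on the closed unit disc (the Enestrom-Kakeya argument),
  so P has no zeros in the open disc, and it has none on the unit circle because \<open>\<xi>\<close> has none.
  Hence P has a holomorphic logarithm on a slightly larger disc, so \<open>log P(exp(-i k))\<close> returns
  to its initial value as k runs through \<open>[-\<pi>, \<pi>]\<close> and contributes nothing to the winding
  number, which is therefore that of \<open>exp(i l\<^sub>1 k)\<close>, namely \<open>l\<^sub>1\<close>.
\<close>

lemma Re_one_minus_mult_decreasing_sum_ge:
  fixes z :: complex and c :: "nat \<Rightarrow> real"
  assumes "norm z \<le> 1" and "\<And>m. m < n \<Longrightarrow> c (Suc m) \<le> c m" and "0 \<le> c n"
  shows "(1 - norm z) * c 0 \<le> Re ((1 - z) * (\<Sum>m\<le>n. of_real (c m) * z ^ m))"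
  using assms(2,3)
proof (induction n arbitrary: c)
  case 0
  have "Re z \<le> norm z" by (rule complex_Re_le_cmod)
  with "0.prems" show ?case by (simp add: algebra_simps mult_right_mono)
next
  case (Suc n)
  \<comment> \<open>Lowering all coefficients by \<open>c (Suc n)\<close> splits off \<open>c (Suc n)\<close> times a geometric sum.\<close>
  define d where "d m = c m - c (Suc n)" for m
  have IH: "(1 - norm z) * d 0 \<le> Re ((1 - z) * (\<Sum>m\<le>n. of_real (d m) * z ^ m))"
    using Suc.prems by (intro Suc.IH) (auto simp: d_def)
  have split: "(\<Sum>m\<le>Suc n. of_real (c m) * z ^ m) =
      (\<Sum>m\<le>n. of_real (d m) * z ^ m) + of_real (c (Suc n)) * (\<Sum>m<Suc (Suc n). z ^ m)"
    by (simp add: d_def sum_distrib_left algebra_simps sum.distrib lessThan_Suc_atMost sum_subtractf)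
  have "norm z ^ Suc (Suc n) \<le> norm z ^ 1"
    using assms(1) by (intro power_decreasing) auto
  then have "norm (z ^ Suc (Suc n)) \<le> norm z"
    by (simp only: norm_power power_one_right)
  then have "Re (z ^ Suc (Suc n)) \<le> norm z"
    using complex_Re_le_cmod order_trans by blast
  then have geo: "1 - norm z \<le> Re ((1 - z) * (\<Sum>m<Suc (Suc n). z ^ m))"
    unfolding one_diff_power_eq[symmetric] minus_complex.sel one_complex.sel by linarith
  have "(1 - norm z) * c 0 = (1 - norm z) * d 0 + c (Suc n) * (1 - norm z)"
    by (simp add: d_def algebra_simps)
  also have "\<dots> \<le> Re ((1 - z) * (\<Sum>m\<le>n. of_real (d m) * z ^ m))
      + c (Suc n) * Re ((1 - z) * (\<Sum>m<Suc (Suc n). z ^ m))"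
    using IH geo Suc.prems(2) by (intro add_mono mult_left_mono) auto
  also have "\<dots> = Re ((1 - z) * (\<Sum>m\<le>Suc n. of_real (c m) * z ^ m))"
    unfolding split by (simp add: algebra_simps)
  finally show ?case .
qed

lemma decreasing_coeffs_sum_nonzero:
  fixes z :: complex and c :: "nat \<Rightarrow> real"
  assumes "norm z < 1" and "0 < c 0" and "\<And>m. m < n \<Longrightarrow> c (Suc m) \<le> c m" and "0 \<le> c n"
  shows "(\<Sum>m\<le>n. of_real (c m) * z ^ m) \<noteq> 0"
proof
  assume "(\<Sum>m\<le>n. of_real (c m) * z ^ m) = 0"
  then have "(1 - norm z) * c 0 \<le> 0"
    using Re_one_minus_mult_decreasing_sum_ge[of z n c] assms by simp
  moreover have "0 < (1 - norm z) * c 0" using assms(1,2) by simp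
  ultimately show False by simp
qed

lemma nonzero_on_larger_ball:
  fixes f :: "'a::{real_normed_vector,heine_borel} \<Rightarrow> 'b::real_normed_vector"
  assumes "continuous_on UNIV f" and "0 \<le> R" and "\<And>z. norm z \<le> R \<Longrightarrow> f z \<noteq> 0"
  obtains R' where "R < R'" and "\<And>z. norm z < R' \<Longrightarrow> f z \<noteq> 0"
proof -
  have "open {z. f z \<noteq> 0}"
    using assms(1) by (intro open_Collect_neq continuous_on_const)
  moreover have "cball 0 R \<subseteq> {z. f z \<noteq> 0}"
    using assms(3) by auto
  ultimately obtain e where "e > 0" and e: "(\<Union>x\<in>cball 0 R. ball x e) \<subseteq> {z. f z \<noteq> 0}"
    using compact_subset_open_imp_ball_epsilon_subset[OF compact_cball] by blast
  show ?thesis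
  proof
    show "R < R + e" using \<open>e > 0\<close> by simp
  next
    fix z :: 'a assume z: "norm z < R + e"
    define x where "x = (R / (R + e)) *\<^sub>R z"
    have "norm x = R / (R + e) * norm z"
      using \<open>e > 0\<close> assms(2) by (simp add: x_def)
    also have "\<dots> \<le> R / (R + e) * (R + e)"
      using z \<open>e > 0\<close> assms(2) by (intro mult_left_mono) auto
    finally have "norm x \<le> R" using \<open>e > 0\<close> assms(2) by simp
    have "1 - R / (R + e) = e / (R + e)"
      using \<open>e > 0\<close> assms(2) by (simp add: field_simps)
    then have "z - x = (e / (R + e)) *\<^sub>R z"
      by (metis scaleR_diff_left scaleR_one x_def)
    then have "norm (z - x) = e / (R + e) * norm z"
      using \<open>e > 0\<close> assms(2) by simp
    also have "\<dots> < e / (R + e) * (R + e)"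
      using z \<open>e > 0\<close> assms(2) by (intro mult_strict_left_mono) auto
    finally have "dist x z < e"
      using \<open>e > 0\<close> assms(2) by (simp add: dist_norm norm_minus_commute)
    with \<open>norm x \<le> R\<close> have "z \<in> (\<Union>x\<in>cball 0 R. ball x e)"
      by (intro UN_I[of x]) auto
    with e show "f z \<noteq> 0" by blast
  qed
qed

lemma integral_logderiv_exp:
  fixes H H' :: "real \<Rightarrow> complex"
  assumes "a \<le> b" and H: "\<And>k. (H has_vector_derivative H' k) (at k)"
  shows "integral {a..b} (\<lambda>k. vector_derivative (\<lambda>k. exp (H k)) (at k) / exp (H k)) = H b - H a"
proof -
  have "vector_derivative (\<lambda>k. exp (H k)) (at k) / exp (H k) = H' k" for k
  proof -
    have "((exp \<circ> H) has_vector_derivative H' k * exp (H k)) (at k)"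
      using H by (rule field_vector_diff_chain_at) (rule DERIV_exp)
    then show ?thesis by (simp add: o_def vector_derivative_at)
  qed
  moreover have "(H' has_integral H b - H a) {a..b}"
    using assms by (intro fundamental_theorem_of_calculus) (auto intro: has_vector_derivative_at_within)
  ultimately show ?thesis by (simp add: integral_unique)
qed

lemma integral_logderiv_exp_mult_circle:
  fixes P :: "complex \<Rightarrow> complex" and m :: int
  assumes "P holomorphic_on UNIV" and "\<And>z. norm z \<le> 1 \<Longrightarrow> P z \<noteq> 0"
  defines "f \<equiv> \<lambda>k::real. exp (\<i> * of_int m * of_real k) * P (exp (- \<i> * of_real k))"
  shows "integral {-pi..pi} (\<lambda>k. vector_derivative f (at k) / f k) = 2 * pi * \<i> * of_int m"
proof -
  obtain R where "1 < R" and R: "\<And>z. norm z < R \<Longrightarrow> P z \<noteq> 0"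
    using nonzero_on_larger_ball[of P 1] assms(1,2) holomorphic_on_imp_continuous_on by auto
  obtain g where g: "g holomorphic_on ball 0 R"
    and exp_g: "\<And>z. z \<in> ball 0 R \<Longrightarrow> exp (g z) = P z"
    using holomorphic_logarithm_exists[of "ball 0 R" P 0] assms(1) R \<open>1 < R\<close>
    by (auto intro: holomorphic_on_subset)
  have circle: "exp (- \<i> * w) \<in> ball 0 R" if "w \<in> \<real>" for w
    using that \<open>1 < R\<close> by (auto elim: Reals_cases)
  define G where "G w = \<i> * of_int m * w + g (exp (- \<i> * w))" for w
  have G: "(G has_field_derivative
      \<i> * of_int m + deriv g (exp (- \<i> * w)) * (- \<i> * exp (- \<i> * w))) (at w)"
    if "w \<in> \<real>" for w
  proof -
    have "(g has_field_derivative deriv g (exp (- \<i> * w))) (at (exp (- \<i> * w)))"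
      using holomorphic_derivI[OF g open_ball circle[OF that]] .
    then have "((\<lambda>w. g (exp (- \<i> * w))) has_field_derivative
        deriv g (exp (- \<i> * w)) * (- \<i> * exp (- \<i> * w))) (at w)"
      by (rule DERIV_chain2) (auto intro!: derivative_eq_intros)
    then show ?thesis
      unfolding G_def by (auto intro!: derivative_eq_intros)
  qed
  have f_eq: "f = (\<lambda>k. exp (G (of_real k)))"
    using exp_g[OF circle] by (auto simp: f_def G_def exp_add)
  have G_real: "((\<lambda>k. G (of_real k)) has_vector_derivative
      \<i> * of_int m + deriv g (exp (- \<i> * k)) * (- \<i> * exp (- \<i> * k))) (at k)" for k :: real
    using G[of "of_real k"] by (auto intro: has_vector_derivative_real_field)
  have "integral {-pi..pi} (\<lambda>k. vector_derivative f (at k) / f k) = G pi - G (- pi)"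
    unfolding f_eq by (rule integral_logderiv_exp[OF _ G_real]) simp
  also have "\<dots> = 2 * pi * \<i> * of_int m"
    \<comment> \<open>\<open>exp (- \<i> * w)\<close> has period \<open>2 * pi\<close>, so the logarithm term cancels.\<close>
    by (simp add: G_def exp_minus algebra_simps)
  finally show ?thesis .
qed

lemma xi_eq_exp_mult_sum:
  assumes "\<And>l. int l1 < l \<Longrightarrow> T (- l) 0 = 0" and "\<And>l. int l2 < l \<Longrightarrow> T l 0 = 0"
  shows "xi T k = exp (\<i> * of_int (int l1) * of_real k) *
    (\<Sum>m\<le>l1 + l2. of_real (T (int m - int l1) 0) * exp (- \<i> * of_real k) ^ m)"
proof -
  have "xi T k = (\<Sum>l\<in>{- int l1..int l2}. of_real (T l 0) * exp (- \<i> * of_real k * of_int l))"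
    unfolding xi_def
  proof (subst infsum_cong_neutral[where T = "{- int l1..int l2}"])
    fix l assume "l \<in> UNIV - {- int l1..int l2}"
    then have "T l 0 = 0"
      using assms by (metis DiffD2 atLeastAtMost_iff linorder_not_le minus_less_iff minus_minus)
    then show "of_real (T l 0) * exp (- \<i> * of_real k * of_int l) = 0" by simp
  qed auto
  also have "\<dots> = (\<Sum>m\<le>l1 + l2.
      of_real (T (int m - int l1) 0) * exp (- \<i> * of_real k * of_int (int m - int l1)))"
    by (rule sum.reindex_bij_witness[where j = "\<lambda>l. nat (l + int l1)" and i = "\<lambda>m. int m - int l1"])
      auto
  also have "\<dots> = exp (\<i> * of_int (int l1) * of_real k) *
      (\<Sum>m\<le>l1 + l2. of_real (T (int m - int l1) 0) * exp (- \<i> * of_real k) ^ m)"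
    unfolding sum_distrib_left
  proof (rule sum.cong[OF refl])
    fix m
    have "exp (- \<i> * of_real k * of_int (int m - int l1)) =
        exp (\<i> * of_int (int l1) * of_real k + of_nat m * (- \<i> * of_real k))"
      by (simp add: algebra_simps)
    also have "\<dots> = exp (\<i> * of_int (int l1) * of_real k) * exp (- \<i> * of_real k) ^ m"
      by (simp only: exp_add exp_of_nat_mult)
    finally show "of_real (T (int m - int l1) 0) * exp (- \<i> * of_real k * of_int (int m - int l1)) =
        exp (\<i> * of_int (int l1) * of_real k) *
          (of_real (T (int m - int l1) 0) * exp (- \<i> * of_real k) ^ m)"
      by simp
  qed
  finally show ?thesis .
qed

lemma winding_eq_of_decreasing_column:
  fixes T :: "int \<Rightarrow> int \<Rightarrow> real" and l1 l2 :: nat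
  assumes nonneg: "\<And>i. 0 \<le> T i 0"
    and below: "\<And>l. int l1 < l \<Longrightarrow> T (- l) 0 = 0" and above: "\<And>l. int l2 < l \<Longrightarrow> T l 0 = 0"
    and first: "T (- int l1) 0 \<noteq> 0"
    and decreasing: "\<And>l l'. - int l1 \<le> l \<Longrightarrow> l \<le> l' \<Longrightarrow> l' \<le> int l2 \<Longrightarrow> T l' 0 \<le> T l 0"
    and xi_nonzero: "\<forall>k\<in>{-pi..pi}. xi T k \<noteq> 0"
  shows "winding T = of_nat l1"
proof -
  define c where "c m = T (int m - int l1) 0" for m
  define P where "P z = (\<Sum>m\<le>l1 + l2. of_real (c m) * z ^ m)" for z :: complex
  have xi_P: "xi T = (\<lambda>k. exp (\<i> * of_int (int l1) * of_real k) * P (exp (- \<i> * of_real k)))"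
    using xi_eq_exp_mult_sum[of l1 T l2, OF below above] by (auto simp: P_def c_def)
  have "P z \<noteq> 0" if "norm z \<le> 1" for z
  proof (cases "norm z < 1")
    case True
    have "0 < c 0" using nonneg first by (simp add: c_def order_le_neq_trans)
    moreover have "c (Suc m) \<le> c m" if "m < l1 + l2" for m
      using decreasing that by (simp add: c_def)
    moreover have "0 \<le> c (l1 + l2)"
      by (simp add: c_def nonneg)
    ultimately show ?thesis
      unfolding P_def using True decreasing_coeffs_sum_nonzero by blast
  next
    case False
    with that have "norm z = 1" by simp
    then have "z = exp (\<i> * of_real (Arg z))"
      using Arg_eq[of z] by (cases "z = 0") auto
    then have "z = exp (- \<i> * of_real (- Arg z))"
      by simp
    moreover have "- Arg z \<in> {-pi..pi}"
      using Arg_bounded[of z] by auto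
    ultimately show ?thesis
      using xi_nonzero xi_P by (metis mult_eq_0_iff)
  qed
  then have "integral {-pi..pi} (\<lambda>k. vector_derivative (xi T) (at k) / xi T k) =
      2 * pi * \<i> * of_nat l1"
    unfolding xi_P P_def
    by (subst integral_logderiv_exp_mult_circle) (auto intro!: holomorphic_intros simp: P_def)
  then show ?thesis by (simp add: winding_def)
qed

lemma winding_eq_of_strictly_finite_ranged:
  fixes T :: "int \<Rightarrow> int \<Rightarrow> real"
  assumes "\<And>i j. 0 \<le> T i j" and range: "strictly_finite_ranged T l1 l2"
    and decreasing: "\<forall>j l l'. - int l1 \<le> l \<and> l \<le> l' \<and> l' \<le> int l2 \<longrightarrow> T (j + l') j \<le> T (j + l) j"
    and "\<forall>k\<in>{-pi..pi}. xi T k \<noteq> 0"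
  shows "winding T = of_nat l1"
proof (rule winding_eq_of_decreasing_column[of T l1 l2])
  show "T (- l) 0 = 0" if "int l1 < l" for l
    using range that unfolding strictly_finite_ranged_def by (metis diff_0)
  show "T l 0 = 0" if "int l2 < l" for l
    using range that unfolding strictly_finite_ranged_def by (metis add_0)
  show "T (- int l1) 0 \<noteq> 0"
    using range unfolding strictly_finite_ranged_def by (metis diff_0)
  show "T l' 0 \<le> T l 0" if "- int l1 \<le> l" "l \<le> l'" "l' \<le> int l2" for l l'
    using decreasing that by (metis add_0)
qed (use assms in auto)

lemma strictly_finite_ranged_lower_range_eq_0:
  assumes "strictly_finite_ranged T l1 l2" and "\<forall>j l. l < 0 \<longrightarrow> T (j + l) j = 0"
  shows "l1 = 0"
proof (rule ccontr)
  assume "l1 \<noteq> 0"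
  then have "- int l1 < 0" by simp
  then have "T (0 + - int l1) 0 = 0" using assms(2) by blast
  moreover have "T (0 - int l1) 0 \<noteq> 0"
    using assms(1) unfolding strictly_finite_ranged_def by blast
  ultimately show False by simp
qed

theorem mainTheorem5:
  fixes T :: "int \<Rightarrow> int \<Rightarrow> real"
  assumes "stochastic T" and "translation_invariant T"
    and "\<forall>k\<in>{-pi..pi}. xi T k \<noteq> 0"
  shows "(\<forall>l1 l2. strictly_finite_ranged T l1 l2 \<longrightarrow>
            (\<forall>j l l'. - int l1 \<le> l \<and> l \<le> l' \<and> l' \<le> int l2 \<longrightarrow> T (j + l') j \<le> T (j + l) j) \<longrightarrow>
            winding T = of_nat l1)
       \<and> (\<forall>l1 l2. strictly_finite_ranged T l1 l2 \<longrightarrow>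
            (\<forall>j l. l < 0 \<longrightarrow> T (j + l) j = 0) \<longrightarrow>
            (\<forall>j l l'. 0 \<le> l \<and> l \<le> l' \<and> l' \<le> int l2 \<longrightarrow> T (j + l') j \<le> T (j + l) j) \<longrightarrow>
            winding T = 0)"
proof -
  have nonneg: "\<And>i j. 0 \<le> T i j"
    using assms(1) by (simp add: stochastic_def)
  show ?thesis
  proof (intro conjI allI impI)
    fix l1 l2
    assume "strictly_finite_ranged T l1 l2"
      and "\<forall>j l l'. - int l1 \<le> l \<and> l \<le> l' \<and> l' \<le> int l2 \<longrightarrow> T (j + l') j \<le> T (j + l) j"
    then show "winding T = of_nat l1"
      by (rule winding_eq_of_strictly_finite_ranged[OF nonneg _ _ assms(3)])
  next
    fix l1 l2
    assume range: "strictly_finite_ranged T l1 l2"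
      and lower_vanishes: "\<forall>j l. l < 0 \<longrightarrow> T (j + l) j = 0"
      and "\<forall>j l l'. 0 \<le> l \<and> l \<le> l' \<and> l' \<le> int l2 \<longrightarrow> T (j + l') j \<le> T (j + l) j"
    moreover have "l1 = 0"
      using range lower_vanishes by (rule strictly_finite_ranged_lower_range_eq_0)
    ultimately show "winding T = 0"
      using winding_eq_of_strictly_finite_ranged[OF nonneg range _ assms(3)] by simp
  qed
qed

end
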